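(* Let $n\ge 3$ and $k\ge 0$ be integers and let $G_n^k$ be the graph of critical pairs of the crown $S_n^k$ (defined in the context). Then the maximum size of an independent set in $G_n^k$ is $(k+1)(k+2)/2$.
   Context: For integers $n\ge3$, $k\ge0$, the crown $S_n^k$ is the poset with ground set $A\cup B$, where $A=\{a_1,\dots,a_{n+k}\}$ and $B=\{b_1,\dots,b_{n+k}\}$, indices interpreted cyclically modulo $n+k$. Elements of $A$ are pairwise incomparable, elements of $B$ are pairwise incomparable, and for $a_i\in A$, $b_j\in B$: $a_i$ is incomparable to $b_j$ when $j\in\{i,i+1,\dots,i+k\}$ (mod $n+k$), and $a_i<b_j$ otherwise. Let $\mathrm{Inc}(A,B)$ be the set of pairs $(a,b)\in A\times B$ with $a$ incomparable to $b$. The graph $G_n^k$ has vertex set $\mathrm{Inc}(A,B)$, and $(a,b)$ is adjacent to $(x,y)$ if and only if $a<y$ and $x<b$ in $S_n^k$. *)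

theory Defs
  imports Main
begin

text \<open>Elements of the crown: A i and B i, indices 0..n+k-1 (cyclic mod n+k).\<close>
datatype crown_elt = CA nat | CB nat

definition crown_ground :: "nat \<Rightarrow> nat \<Rightarrow> crown_elt set" where
  "crown_ground n k = CA ` {..<n+k} \<union> CB ` {..<n+k}"

definition crown_less :: "nat \<Rightarrow> nat \<Rightarrow> crown_elt \<Rightarrow> crown_elt \<Rightarrow> bool" where
  "crown_less n k x y \<longleftrightarrow> (\<exists>i j. x = CA i \<and> y = CB j \<and> i < n+k \<and> j < n+k \<and>
      \<not> ((j + (n+k) - i) mod (n+k) \<le> k))"

definition crown_incomparable :: "nat \<Rightarrow> nat \<Rightarrow> crown_elt \<Rightarrow> crown_elt \<Rightarrow> bool" where
  "crown_incomparable n k x y \<longleftrightarrow> x \<noteq> y \<and> \<not> crown_less n k x y \<and> \<not> crown_less n k y x"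

definition crown_Inc :: "nat \<Rightarrow> nat \<Rightarrow> (crown_elt \<times> crown_elt) set" where
  "crown_Inc n k = {(a, b). a \<in> CA ` {..<n+k} \<and> b \<in> CB ` {..<n+k} \<and> crown_incomparable n k a b}"

definition G_adj :: "nat \<Rightarrow> nat \<Rightarrow> (crown_elt \<times> crown_elt) \<Rightarrow> (crown_elt \<times> crown_elt) \<Rightarrow> bool" where
  "G_adj n k p q \<longleftrightarrow> (case p of (a, b) \<Rightarrow> case q of (x, y) \<Rightarrow>
      crown_less n k a y \<and> crown_less n k x b)"

definition G_independent :: "nat \<Rightarrow> nat \<Rightarrow> (crown_elt \<times> crown_elt) set \<Rightarrow> bool" where
  "G_independent n k S \<longleftrightarrow> S \<subseteq> crown_Inc n k \<and> (\<forall>p\<in>S. \<forall>q\<in>S. \<not> G_adj n k p q)"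

definition G_independence_number :: "nat \<Rightarrow> nat \<Rightarrow> nat" where
  "G_independence_number n k = Max (card ` {S. G_independent n k S})"

end

theory Submission
  imports Defs
begin

text \<open>
  Number the elements of both antichains by \<open>\<int>/N\<int>\<close>, \<open>N = n + k\<close>. A critical pair \<open>(a\<^sub>i, b\<^sub>j)\<close>
  is a pair whose cyclic offset \<open>j - i\<close> is at most \<open>k\<close>, and two of them \<open>(i, j)\<close>, \<open>(x, y)\<close> are
  non-adjacent iff \<open>y\<close> lies in the window \<open>[i, i + k]\<close> or \<open>j\<close> lies in \<open>[x, x + k]\<close>.
  The pairs \<open>(i, j)\<close> with \<open>i \<le> j \<le> k\<close> form an independent set of size \<open>(k+1)(k+2)/2\<close>.

  For the upper bound let \<open>U\<close> be the set of first coordinates of an independent set \<open>S\<close>, \<open>T w\<close> the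
  second coordinates paired with \<open>w\<close>, and say \<open>w\<close> is covered by \<open>w'\<close> if \<open>T w\<close> lies in the window
  of \<open>w'\<close>. Independence says that of any two distinct \<open>w, w' \<in> U\<close> one covers the other, so there
  are at least \<open>|U|(|U|-1)/2\<close> coverings. On the other hand, for fixed \<open>w\<close> the offsets of \<open>T w\<close> and
  of the elements covering \<open>w\<close>, both measured from \<open>w\<close>, must avoid each other by gaps of length
  \<open>n\<close> on the cycle, which leaves room for at most \<open>k + 1\<close> of them altogether. Summing over \<open>w\<close>,
  \<open>2|S| + |U|(|U|-1) \<le> 2|U|(k+1) \<le> |U|(|U|-1) + (k+1)(k+2)\<close>.
\<close>

definition cyclic_offset :: "nat \<Rightarrow> nat \<Rightarrow> nat \<Rightarrow> nat" where
  "cyclic_offset N a b = (b + N - a) mod N"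

lemma cyclic_offset_eq:
  assumes "a < N" "b < N"
  shows "cyclic_offset N a b = (if a \<le> b then b - a else b + N - a)"
proof (cases "a \<le> b")
  case True
  then have "(b + N - a) mod N = (b - a) mod N"
    by (metis Nat.add_diff_assoc2 mod_add_self2)
  with True \<open>b < N\<close> show ?thesis by (simp add: cyclic_offset_def)
qed (use assms in \<open>simp add: cyclic_offset_def\<close>)

lemma inj_on_cyclic_offset: "a < N \<Longrightarrow> inj_on (cyclic_offset N a) {..<N}"
  by (auto simp: inj_on_def cyclic_offset_eq split: if_splits)

text \<open>
  If the points of \<open>D\<close> avoid the open intervals \<open>(x, x + n)\<close>, \<open>x \<in> M\<close>, then the \<open>n - 1\<close> points
  after \<open>min M\<close> and the points \<open>x + n - 1\<close> for the other \<open>x \<in> M\<close> are distinct from each other and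
  from \<open>D\<close>.
\<close>
lemma card_gap_packing:
  fixes M D :: "nat set"
  assumes "n \<ge> 2" and M: "finite M" "M \<noteq> {}" "M \<subseteq> {..k}" and D: "D \<subseteq> {1..<n+k}"
    and gaps: "\<forall>x\<in>M. \<forall>d\<in>D. \<not> (x < d \<and> d < x + n)"
  shows "card M + card D \<le> k + 1"
proof -
  define m where "m = Min M"
  have m: "m \<in> M" "\<forall>x\<in>M. m \<le> x" unfolding m_def using M by simp_all
  define A where "A = {m+1..<m+n}"
  define B where "B = (\<lambda>x. x + n - 1) ` (M - {m})"
  have "card A = n - 1" unfolding A_def by simp
  moreover have "card B = card M - 1"
  proof -
    have "inj_on (\<lambda>x. x + n - 1) (M - {m})" using \<open>n \<ge> 2\<close> by (auto simp: inj_on_def)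
    then show ?thesis unfolding B_def using m(1) M(1) by (simp add: card_image)
  qed
  moreover have "card (A \<union> B \<union> D) = card A + card B + card D"
  proof -
    have "A \<inter> B = {}" unfolding A_def B_def using m(2) \<open>n \<ge> 2\<close> by force
    moreover have "A \<inter> D = {}" unfolding A_def using gaps m(1) by force
    moreover have "B \<inter> D = {}" unfolding B_def using gaps \<open>n \<ge> 2\<close> by force
    moreover have "finite D" using D by (rule finite_subset) simp
    moreover have "finite A" "finite B" unfolding A_def B_def using M(1) by simp_all
    ultimately show ?thesis by (simp add: card_Un_disjoint Int_Un_distrib2)
  qed
  moreover have "card (A \<union> B \<union> D) \<le> n + k - 1"
  proof -
    have "\<forall>x\<in>M. x \<le> k" using M(3) by auto
    then have "A \<union> B \<union> D \<subseteq> {1..<n+k}" unfolding A_def B_def using D m(1) \<open>n \<ge> 2\<close> by force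
    then show ?thesis using card_mono[of "{1..<n+k}"] by simp
  qed
  moreover have "card M \<ge> 1" using M(1,2) by (simp add: Suc_leI card_gt_0_iff)
  ultimately show ?thesis by linarith
qed

lemma card_offdiagonal_le_twice_out_degrees:
  assumes "finite U" and total: "\<forall>a\<in>U. \<forall>b\<in>U. a \<noteq> b \<longrightarrow> R a b \<or> R b a"
  shows "card U * (card U - 1) \<le> 2 * (\<Sum>a\<in>U. card {b\<in>U. b \<noteq> a \<and> R a b})"
proof -
  define P where "P = Sigma U (\<lambda>a. {b\<in>U. b \<noteq> a \<and> R a b})"
  have "finite P" unfolding P_def using \<open>finite U\<close> by simp
  have "Sigma U (\<lambda>a. U - {a}) \<subseteq> P \<union> prod.swap ` P"
  proof (rule subsetI)
    fix z assume "z \<in> Sigma U (\<lambda>a. U - {a})"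
    then obtain a b where z: "z = (a, b)" "a \<in> U" "b \<in> U" "b \<noteq> a" by blast
    with total have "(a, b) \<in> P \<or> prod.swap (b, a) \<in> prod.swap ` P"
      unfolding P_def by blast
    then show "z \<in> P \<union> prod.swap ` P" using z(1) by auto
  qed
  then have "card (Sigma U (\<lambda>a. U - {a})) \<le> card (P \<union> prod.swap ` P)"
    using \<open>finite P\<close> by (intro card_mono) auto
  also have "\<dots> \<le> card P + card (prod.swap ` P)" by (rule card_Un_le)
  also have "\<dots> \<le> 2 * card P" using card_image_le[OF \<open>finite P\<close>] by simp
  finally show ?thesis unfolding P_def using \<open>finite U\<close> by (simp add: card_SigmaI)
qed

lemma double_mult_le_pronic_add_pronic: "2 * r * (k + 1) \<le> r * (r - 1) + (k + 1) * ((k::nat) + 2)"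
proof -
  have "0 \<le> (int k + 1 - int r) * (int k + 1 - int r + 1)"
    by (cases "int r \<le> int k + 1") (simp_all add: mult_nonpos_nonpos)
  then have "int (2 * r * (k + 1)) \<le> int (r * (r - 1) + (k + 1) * (k + 2))"
    by (cases r) (simp_all add: algebra_simps)
  then show ?thesis by linarith
qed

definition offset_independent :: "nat \<Rightarrow> nat \<Rightarrow> (nat \<times> nat) set \<Rightarrow> bool" where
  "offset_independent N k S \<longleftrightarrow>
     (\<forall>i j. (i, j) \<in> S \<longrightarrow> i < N \<and> j < N \<and> cyclic_offset N i j \<le> k) \<and>
     (\<forall>i j x y. (i, j) \<in> S \<longrightarrow> (x, y) \<in> S \<longrightarrow> cyclic_offset N i y \<le> k \<or> cyclic_offset N x j \<le> k)"

lemma card_window_plus_covers: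
  assumes "n \<ge> 2" "w < n + k"
    and T: "T \<subseteq> {j. j < n + k \<and> cyclic_offset (n + k) w j \<le> k}" "T \<noteq> {}"
    and W: "W \<subseteq> {w'. w' < n + k \<and> w' \<noteq> w \<and> (\<forall>j\<in>T. cyclic_offset (n + k) w' j \<le> k)}"
  shows "card T + card W \<le> k + 1"
proof -
  let ?off = "cyclic_offset (n + k) w"
  have inj_T: "inj_on ?off T" and inj_W: "inj_on ?off W"
    using T(1) W by (auto intro: inj_on_subset[OF inj_on_cyclic_offset[OF \<open>w < n + k\<close>]])
  have "finite T" using T(1) by (rule finite_subset) auto
  have "card (?off ` T) + card (?off ` W) \<le> k + 1"
  proof (rule card_gap_packing[OF \<open>n \<ge> 2\<close>])
    show "finite (?off ` T)" "?off ` T \<noteq> {}" "?off ` T \<subseteq> {..k}"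
      using \<open>finite T\<close> T by auto
    show "?off ` W \<subseteq> {1..<n + k}"
      using W \<open>w < n + k\<close> by (force simp: cyclic_offset_eq)
    show "\<forall>x\<in>?off ` T. \<forall>d\<in>?off ` W. \<not> (x < d \<and> d < x + n)"
      using T(1) W \<open>w < n + k\<close> by (fastforce simp: cyclic_offset_eq split: if_splits)
  qed
  then show ?thesis using inj_T inj_W by (simp add: card_image)
qed

lemma offset_independent_card:
  assumes "n \<ge> 2" and S: "offset_independent (n + k) k S"
  shows "2 * card S \<le> (k + 1) * (k + 2)"
proof -
  let ?N = "n + k"
  define U where "U = fst ` S"
  define T where "T w = {j. (w, j) \<in> S}" for w
  define covers where "covers w' w \<longleftrightarrow> (\<forall>j\<in>T w. cyclic_offset ?N w' j \<le> k)" for w' w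
  define W where "W w = {w'\<in>U. w' \<noteq> w \<and> covers w' w}" for w
  have S_sub: "S \<subseteq> {..<?N} \<times> {..<?N}" using S by (auto simp: offset_independent_def)
  then have "finite S" by (rule finite_subset) auto
  then have "finite U" unfolding U_def by simp
  have "finite (T w)" for w
  proof (rule finite_subset)
    show "T w \<subseteq> snd ` S" unfolding T_def by force
  qed (use \<open>finite S\<close> in simp)
  have "S = Sigma U T" unfolding U_def T_def by force
  then have card_S: "card S = (\<Sum>w\<in>U. card (T w))"
    using \<open>finite U\<close> \<open>finite (T _)\<close> by (simp add: card_SigmaI)
  have "card (T w) + card (W w) \<le> k + 1" if "w \<in> U" for w
  proof (rule card_window_plus_covers[OF \<open>n \<ge> 2\<close>])
    show "w < ?N" using that S_sub unfolding U_def by auto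
    show "T w \<subseteq> {j. j < ?N \<and> cyclic_offset ?N w j \<le> k}" "T w \<noteq> {}"
      using that S S_sub unfolding T_def U_def offset_independent_def by auto
    show "W w \<subseteq> {w'. w' < ?N \<and> w' \<noteq> w \<and> (\<forall>j\<in>T w. cyclic_offset ?N w' j \<le> k)}"
      using S_sub unfolding W_def covers_def U_def by auto
  qed
  then have "card S + (\<Sum>w\<in>U. card (W w)) \<le> card U * (k + 1)"
    using sum_mono[of U "\<lambda>w. card (T w) + card (W w)" "\<lambda>_. k + 1"]
    by (simp add: card_S sum.distrib)
  moreover have "card U * (card U - 1) \<le> 2 * (\<Sum>w\<in>U. card (W w))"
  proof -
    have "\<forall>a\<in>U. \<forall>b\<in>U. a \<noteq> b \<longrightarrow> covers b a \<or> covers a b"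
      using S unfolding covers_def T_def offset_independent_def by fastforce
    from card_offdiagonal_le_twice_out_degrees[OF \<open>finite U\<close> this] show ?thesis
      unfolding W_def by (simp add: conj_commute)
  qed
  moreover have "2 * card U * (k + 1) \<le> card U * (card U - 1) + (k + 1) * (k + 2)"
    by (rule double_mult_le_pronic_add_pronic)
  ultimately show ?thesis by linarith
qed

lemma offset_independent_triangle:
  "n \<ge> 1 \<Longrightarrow> offset_independent (n + k) k {(i, j). i \<le> j \<and> j \<le> k}"
  by (auto simp: offset_independent_def cyclic_offset_eq)

lemma card_triangle: "2 * card {(i, j). i \<le> j \<and> j \<le> (k::nat)} = (k + 1) * (k + 2)"
proof -
  have "{(i, j). i \<le> j \<and> j \<le> k} = prod.swap ` (SIGMA j:{..k}. {..j})" by force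
  then have "card {(i, j). i \<le> j \<and> j \<le> k} = (\<Sum>j\<le>k. Suc j)"
    by (simp add: card_image)
  moreover have "2 * (\<Sum>j\<le>k. Suc j) = (k + 1) * (k + 2)"
    by (induction k) (simp_all add: algebra_simps)
  ultimately show ?thesis by simp
qed

lemma crown_less_CA_CB:
  "crown_less n k (CA i) (CB j) \<longleftrightarrow> i < n + k \<and> j < n + k \<and> \<not> cyclic_offset (n + k) i j \<le> k"
  by (simp add: crown_less_def cyclic_offset_def)

lemma crown_Inc_eq:
  "crown_Inc n k = map_prod CA CB ` {(i, j). i < n + k \<and> j < n + k \<and> cyclic_offset (n + k) i j \<le> k}"
  by (auto simp: crown_Inc_def crown_incomparable_def crown_less_CA_CB)
    (auto simp: crown_less_def)

lemma inj_map_prod_CA_CB: "inj (map_prod CA CB)"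
  by (auto simp: inj_on_def)

lemma G_independent_image_iff:
  "G_independent n k (map_prod CA CB ` S) \<longleftrightarrow> offset_independent (n + k) k S"
proof -
  have inc: "map_prod CA CB ` S \<subseteq> crown_Inc n k \<longleftrightarrow>
      (\<forall>i j. (i, j) \<in> S \<longrightarrow> i < n + k \<and> j < n + k \<and> cyclic_offset (n + k) i j \<le> k)"
    by (auto simp: crown_Inc_eq inj_image_subset_iff[OF inj_map_prod_CA_CB])
  have adj: "(\<forall>p\<in>map_prod CA CB ` S. \<forall>q\<in>map_prod CA CB ` S. \<not> G_adj n k p q) \<longleftrightarrow>
      (\<forall>i j x y. (i, j) \<in> S \<longrightarrow> (x, y) \<in> S \<longrightarrow> \<not> G_adj n k (CA i, CB j) (CA x, CB y))"
    by fast
  show ?thesis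
    unfolding G_independent_def offset_independent_def inc adj
    by (auto simp: G_adj_def crown_less_CA_CB; blast)
qed

lemma G_independent_card:
  assumes "n \<ge> 2" "G_independent n k S"
  shows "2 * card S \<le> (k + 1) * (k + 2)"
proof -
  have "S \<subseteq> map_prod CA CB ` UNIV" using assms(2) by (auto simp: G_independent_def crown_Inc_eq)
  then obtain S' where S': "S = map_prod CA CB ` S'" by (auto simp: subset_image_iff)
  then have "offset_independent (n + k) k S'" using assms(2) G_independent_image_iff by blast
  with \<open>n \<ge> 2\<close> have "2 * card S' \<le> (k + 1) * (k + 2)" by (rule offset_independent_card)
  then show ?thesis using S' inj_map_prod_CA_CB by (simp add: card_image inj_on_subset)
qed

lemma finite_crown_Inc: "finite (crown_Inc n k)"
proof (rule finite_subset)
  show "crown_Inc n k \<subseteq> CA ` {..<n + k} \<times> CB ` {..<n + k}"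
    unfolding crown_Inc_def by auto
qed simp

theorem theorem1p2:
  fixes n k :: nat
  assumes "n \<ge> 3"
  shows "G_independence_number n k = (k + 1) * (k + 2) div 2"
proof -
  let ?Tri = "map_prod CA CB ` {(i, j). i \<le> j \<and> j \<le> k}"
  have "G_independent n k ?Tri"
    using assms by (simp add: G_independent_image_iff offset_independent_triangle)
  moreover have "card ?Tri = (k + 1) * (k + 2) div 2"
    using card_triangle[of k] inj_map_prod_CA_CB by (simp add: card_image inj_on_subset)
  ultimately have "(k + 1) * (k + 2) div 2 \<in> card ` {S. G_independent n k S}"
    by (intro image_eqI[of _ card ?Tri]) auto
  moreover have "finite {S. G_independent n k S}"
    using finite_crown_Inc by (rule finite_subset[rotated, OF finite_Pow_iff[THEN iffD2]])
      (auto simp: G_independent_def)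
  moreover have "card S \<le> (k + 1) * (k + 2) div 2" if "G_independent n k S" for S
    using G_independent_card[OF _ that] assms by simp
  ultimately show ?thesis unfolding G_independence_number_def
    by (intro Max_eqI) auto
qed

end
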